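(* Let $N\ge1$ and let $\mathbb{A},\mathbb{B}\in\mathbb{C}_{N\times N}$ be constant matrices with $|\mathbb{B}|\neq 0$ and $\mathbb{A}=\mathbb{B}\mathbb{B}^*$. Let $\varphi(x,t)=(\varphi_1,\dots,\varphi_N)^T$ be a vector of $C^\infty$ complex-valued functions of the real variables $x,t$ satisfying $$\varphi_{xx}=\mathbb{A}\varphi,\qquad \varphi_x=\mathbb{B}\varphi^*,\qquad \varphi_t=-4\varphi_{xxx}.$$ Then the Wronskian $f=|\varphi,\partial_x\varphi,\dots,\partial_x^{N-1}\varphi|$ solves the bilinear mKdV equation $$(D_t+D_x^3)\,f^*\cdot f=0,\qquad D_x^2\,f^*\cdot f=0.$$
   Context: Here $^*$ denotes complex conjugation (entrywise for vectors and matrices). Hirota's bilinear operator is defined by $D_x^mD_t^n\,f(x,t)\cdot g(x,t)=(\partial_x-\partial_{x'})^m(\partial_t-\partial_{t'})^n f(x,t)g(x',t')\big|_{x'=x,\,t'=t}$. The Wronskian $|\varphi,\partial_x\varphi,\dots,\partial_x^{N-1}\varphi|$ is the determinant of the $N\times N$ matrix whose $j$-th column is $\partial_x^{j-1}\varphi$. (Via $v=i(\ln(f^*/f))_x$ such $f$ yields solutions of the mKdV equation $v_t+6v^2v_x+v_{xxx}=0$.) *)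

theory Defs
  imports "HOL-Analysis.Analysis" "Jordan_Normal_Form.Determinant"
begin

definition px :: "(real \<Rightarrow> real \<Rightarrow> complex) \<Rightarrow> real \<Rightarrow> real \<Rightarrow> complex" where
  "px g x t = vector_derivative (\<lambda>y. g y t) (at x)"

definition pt :: "(real \<Rightarrow> real \<Rightarrow> complex) \<Rightarrow> real \<Rightarrow> real \<Rightarrow> complex" where
  "pt g x t = vector_derivative (\<lambda>s. g x s) (at t)"

text \<open>Iterated partial derivative: False = d/dx, True = d/dt (applied from the right).\<close>
fun pder :: "bool list \<Rightarrow> (real \<Rightarrow> real \<Rightarrow> complex) \<Rightarrow> real \<Rightarrow> real \<Rightarrow> complex" where
  "pder [] g = g"
| "pder (b # bs) g = (if b then pt else px) (pder bs g)"

definition smooth2 :: "(real \<Rightarrow> real \<Rightarrow> complex) \<Rightarrow> bool" where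
  "smooth2 g \<longleftrightarrow> (\<forall>bs. (\<forall>x t. (\<lambda>y. pder bs g y t) differentiable (at x)
                            \<and> (\<lambda>s. pder bs g x s) differentiable (at t))
                   \<and> continuous_on UNIV (\<lambda>p. pder bs g (fst p) (snd p)))"

definition wronskian :: "nat \<Rightarrow> (nat \<Rightarrow> real \<Rightarrow> real \<Rightarrow> complex) \<Rightarrow> real \<Rightarrow> real \<Rightarrow> complex" where
  "wronskian N \<phi> x t = Determinant.det (mat N N (\<lambda>(i, j). (px ^^ j) (\<phi> i) x t))"

definition hirota_Dt :: "(real \<Rightarrow> real \<Rightarrow> complex) \<Rightarrow> (real \<Rightarrow> real \<Rightarrow> complex) \<Rightarrow> real \<Rightarrow> real \<Rightarrow> complex" where
  "hirota_Dt f g x t = pt f x t * g x t - f x t * pt g x t"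

definition hirota_Dx2 :: "(real \<Rightarrow> real \<Rightarrow> complex) \<Rightarrow> (real \<Rightarrow> real \<Rightarrow> complex) \<Rightarrow> real \<Rightarrow> real \<Rightarrow> complex" where
  "hirota_Dx2 f g x t = (px ^^ 2) f x t * g x t - 2 * px f x t * px g x t + f x t * (px ^^ 2) g x t"

definition hirota_Dx3 :: "(real \<Rightarrow> real \<Rightarrow> complex) \<Rightarrow> (real \<Rightarrow> real \<Rightarrow> complex) \<Rightarrow> real \<Rightarrow> real \<Rightarrow> complex" where
  "hirota_Dx3 f g x t = (px ^^ 3) f x t * g x t - 3 * (px ^^ 2) f x t * px g x t
                       + 3 * px f x t * (px ^^ 2) g x t - f x t * (px ^^ 3) g x t"

end

(* Write f in Freeman--Nimmo notation as the minor |0, 1, ..., N-1| whose column k is the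
   k-th x-derivative of phi, and label the minors with raised last columns by partitions.
   Differentiating in x raises one column by one, and since phi_t = -4 phi_xxx, differentiating
   in t raises one column by three; alternating signs come from reordering columns. Raising every
   column by two is multiplication by tr A because phi_xx = A phi, and phi_x = B conj(phi) gives
   det B * conj f = g, the Wronskian of phi_x. After these substitutions both bilinear
   expressions are combinations of three-term Pluecker relations between the minors of phi and
   of phi_x, and hence vanish. *)

theory Submission
  imports Defs
begin

definition det_cols :: "nat \<Rightarrow> (nat \<Rightarrow> nat \<Rightarrow> 'a :: comm_ring_1) \<Rightarrow> 'a" where
  "det_cols n c = det (mat n n (\<lambda>(i, j). c j i))"

lemma det_cols_cong:
  "(\<And>i j. i < n \<Longrightarrow> j < n \<Longrightarrow> c j i = c' j i) \<Longrightarrow> det_cols n c = det_cols n c'"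
  unfolding det_cols_def by (rule arg_cong[of _ _ det]) (rule eq_matI, auto)

lemma det_cols_eq_0_if_equal_cols:
  "i < n \<Longrightarrow> j < n \<Longrightarrow> i \<noteq> j \<Longrightarrow> (\<And>r. r < n \<Longrightarrow> c i r = c j r) \<Longrightarrow> det_cols n c = 0"
  unfolding det_cols_def
  by (rule det_identical_columns[of _ n i j]) (auto simp: col_def intro!: eq_vecI)

lemma det_cols_swap:
  assumes "i < n" "j < n" "i \<noteq> j"
    and "\<And>k r. k < n \<Longrightarrow> r < n \<Longrightarrow> c' k r = (if k = i then c j r else if k = j then c i r else c k r)"
  shows "det_cols n c' = - det_cols n c"
proof -
  have "mat n n (\<lambda>(a, b). c' b a) = swapcols i j (mat n n (\<lambda>(a, b). c b a))"
    by (rule eq_matI) (auto simp: mat_swapcols_def assms)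
  then show ?thesis
    unfolding det_cols_def using det_swapcols[OF assms(1-3), of "mat n n (\<lambda>(a, b). c b a)"] by simp
qed

lemma det_cols_update_col:
  assumes "k < n"
  shows "det_cols n (c(k := w)) = (\<Sum>i<n. w i * cofactor (mat n n (\<lambda>(a, b). c b a)) i k)"
proof -
  define M where "M = mat n n (\<lambda>(a, b). (c(k := w)) b a)"
  define M0 where "M0 = mat n n (\<lambda>(a, b). c b a)"
  have "det_cols n (c(k := w)) = (\<Sum>i<n. M $$ (i, k) * cofactor M i k)"
    unfolding det_cols_def M_def by (rule laplace_expansion_column) (auto simp: assms)
  also have "\<dots> = (\<Sum>i<n. w i * cofactor M0 i k)"
  proof (rule sum.cong[OF refl])
    fix i assume i: "i \<in> {..<n}"
    have "mat_delete M i k = mat_delete M0 i k"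
      by (rule eq_matI) (auto simp: mat_delete_def M_def M0_def)
    then show "M $$ (i, k) * cofactor M i k = w i * cofactor M0 i k"
      using i assms by (simp add: cofactor_def M_def)
  qed
  finally show ?thesis by (simp add: M0_def)
qed

lemma det_cols_update_col_scale:
  "k < n \<Longrightarrow> det_cols n (c(k := (\<lambda>i. a * w i))) = a * det_cols n (c(k := w))"
  by (simp add: det_cols_update_col sum_distrib_left mult_ac)

text \<open>In cofactor form this is the identity M * adj M = det M * 1.\<close>
lemma sum_det_cols_update_linear:
  assumes "A \<in> carrier_mat n n"
  shows "(\<Sum>j<n. det_cols n (c(j := (\<lambda>i. \<Sum>l<n. A $$ (i, l) * c j l))))
       = (\<Sum>i<n. A $$ (i, i)) * det_cols n c"
proof -
  define M where "M = mat n n (\<lambda>(a, b). c b a)"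
  have M: "M \<in> carrier_mat n n" by (simp add: M_def)
  have adj: "M * adj_mat M = det M \<cdot>\<^sub>m 1\<^sub>m n" using adj_mat[OF M] by simp
  have cofactor_sum: "(\<Sum>j<n. c j l * cofactor M i j) = (if l = i then det M else 0)"
    if "l < n" "i < n" for l i
  proof -
    have "(M * adj_mat M) $$ (l, i) = (\<Sum>j<n. M $$ (l, j) * cofactor M i j)"
      using that M adj_mat(1)[OF M]
      by (auto simp: times_mat_def scalar_prod_def adj_mat_def intro: sum.cong)
    also have "\<dots> = (\<Sum>j<n. c j l * cofactor M i j)"
      using that by (intro sum.cong) (auto simp: M_def)
    finally show ?thesis using adj that by auto
  qed
  have "(\<Sum>j<n. det_cols n (c(j := (\<lambda>i. \<Sum>l<n. A $$ (i, l) * c j l))))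
      = (\<Sum>j<n. \<Sum>i<n. (\<Sum>l<n. A $$ (i, l) * c j l) * cofactor M i j)"
    by (rule sum.cong[OF refl]) (simp add: det_cols_update_col M_def)
  also have "\<dots> = (\<Sum>i<n. \<Sum>j<n. \<Sum>l<n. A $$ (i, l) * c j l * cofactor M i j)"
    by (subst sum.swap) (simp add: sum_distrib_right)
  also have "\<dots> = (\<Sum>i<n. \<Sum>l<n. \<Sum>j<n. A $$ (i, l) * c j l * cofactor M i j)"
    by (rule sum.cong[OF refl], rule sum.swap)
  also have "\<dots> = (\<Sum>i<n. \<Sum>l<n. A $$ (i, l) * (\<Sum>j<n. c j l * cofactor M i j))"
    by (simp add: sum_distrib_left mult.assoc)
  also have "\<dots> = (\<Sum>i<n. A $$ (i, i) * det M)"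
    by (rule sum.cong[OF refl]) (simp add: cofactor_sum if_distrib cong: if_cong)
  finally show ?thesis by (simp add: M_def det_cols_def sum_distrib_right)
qed

lemma det_cols_1: "det_cols (Suc 0) c = c 0 0"
  unfolding det_cols_def by (subst det_single) auto

lemma det_cols_2: "det_cols (Suc (Suc 0)) c = c 0 0 * c 1 1 - c 1 0 * c 0 1"
proof -
  let ?M = "mat 2 2 (\<lambda>(i, j). c j i)"
  have "det_cols 2 c = (\<Sum>j<2. ?M $$ (0, j) * cofactor ?M 0 j)"
    unfolding det_cols_def by (rule laplace_expansion_row) auto
  also have "\<dots> = c 0 0 * c 1 1 - c 1 0 * c 0 1"
    by (simp add: numeral_2_eq_2 cofactor_def det_single mat_delete_def)
  finally show ?thesis by (simp add: numeral_2_eq_2)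
qed

text \<open>Laplace expansion along the first row of the (n+1)-square matrix with columns
  (v i r, v i 0, ..., v i (n-1)), whose first row repeats row r + 1.\<close>
lemma alternating_sum_det_cols_delete:
  assumes "r < n"
  shows "(\<Sum>i<Suc n. (-1) ^ i * det_cols n (\<lambda>j. if j < i then v j else v (Suc j)) * v i r) = 0"
proof -
  define M where "M = mat (Suc n) (Suc n) (\<lambda>(a, b). if a = 0 then v b r else v b (a - 1))"
  have M: "M \<in> carrier_mat (Suc n) (Suc n)" by (simp add: M_def)
  have "det M = 0"
    by (rule det_identical_rows[OF M, of 0 "Suc r"])
      (use assms in \<open>auto simp: M_def row_def intro!: eq_vecI\<close>)
  moreover have "det M = (\<Sum>b<Suc n. M $$ (0, b) * cofactor M 0 b)"
    by (rule laplace_expansion_row[OF M]) simp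
  moreover have "M $$ (0, b) * cofactor M 0 b
      = (-1) ^ b * det_cols n (\<lambda>j. if j < b then v j else v (Suc j)) * v b r"
    if "b < Suc n" for b
  proof -
    have "mat_delete M 0 b = mat n n (\<lambda>(i, j). (if j < b then v j else v (Suc j)) i)"
      by (rule eq_matI) (auto simp: mat_delete_def M_def)
    then show ?thesis using that by (simp add: cofactor_def det_cols_def M_def)
  qed
  ultimately show ?thesis by simp
qed

text \<open>The map L w = |R, w| is linear in w; applying it to the
  vanishing alternating sum above for the n + 1 columns (Q, a, b, c) leaves only the three terms
  shown, because L kills every column of Q.\<close>
lemma det_cols_plucker:
  assumes n: "2 \<le> n"
    and Q_in_R: "\<And>i. i < n - 2 \<Longrightarrow> \<exists>p < n - 1. R p = Q i"
  shows "det_cols n (\<lambda>j. if j < n - 2 then Q j else if j = n - 2 then b else c)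
           * det_cols n (\<lambda>j. if j < n - 1 then R j else a)
       - det_cols n (\<lambda>j. if j < n - 2 then Q j else if j = n - 2 then a else c)
           * det_cols n (\<lambda>j. if j < n - 1 then R j else b)
       + det_cols n (\<lambda>j. if j < n - 2 then Q j else if j = n - 2 then a else b)
           * det_cols n (\<lambda>j. if j < n - 1 then R j else c) = 0"
proof -
  define L where "L = (\<lambda>w. det_cols n (\<lambda>j. if j < n - 1 then R j else w))"
  define v where "v = (\<lambda>i. if i < n - 2 then Q i else if i = n - 2 then a
                           else if i = n - 1 then b else c)"
  define cs where "cs = (\<lambda>j. if j < n - 1 then R j else (\<lambda>_. 0))"
  define C where "C = (\<lambda>\<rho>. cofactor (mat n n (\<lambda>(x, y). cs y x)) \<rho> (n - 1))"
  define F where "F = (\<lambda>i. (-1) ^ i * det_cols n (\<lambda>j. if j < i then v j else v (Suc j)) * L (v i))"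
  have L_linear: "L w = (\<Sum>\<rho><n. w \<rho> * C \<rho>)" for w
  proof -
    have "L w = det_cols n (cs(n - 1 := w))"
      unfolding L_def by (rule det_cols_cong) (auto simp: cs_def)
    also have "\<dots> = (\<Sum>\<rho><n. w \<rho> * C \<rho>)"
      unfolding C_def by (rule det_cols_update_col) (use n in auto)
    finally show ?thesis .
  qed
  have "(\<Sum>i<Suc n. F i)
      = (\<Sum>\<rho><n. C \<rho> *
          (\<Sum>i<Suc n. (-1) ^ i * det_cols n (\<lambda>j. if j < i then v j else v (Suc j)) * v i \<rho>))"
    unfolding F_def L_linear sum_distrib_left sum_distrib_right
    by (subst sum.swap) (simp add: mult_ac del: sum.lessThan_Suc)
  then have total: "(\<Sum>i<Suc n. F i) = 0"
    by (simp add: alternating_sum_det_cols_delete del: sum.lessThan_Suc)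
  obtain m where m: "n = Suc (Suc m)" using n by (metis add_2_eq_Suc le_Suc_ex)
  have "F i = 0" if i: "i < m" for i
  proof -
    obtain p where p: "p < n - 1" "R p = Q i" using Q_in_R[of i] i m by auto
    have "L (v i) = 0" unfolding L_def
      by (rule det_cols_eq_0_if_equal_cols[of p n "n - 1"]) (use p i m in \<open>auto simp: v_def\<close>)
    then show ?thesis by (simp add: F_def)
  qed
  then have "F m + F (Suc m) + F (Suc (Suc m)) = 0"
    using total by (simp add: m)
  moreover have "det_cols n (\<lambda>j. if j < m then v j else v (Suc j))
      = det_cols n (\<lambda>j. if j < n - 2 then Q j else if j = n - 2 then b else c)"
    "det_cols n (\<lambda>j. if j < Suc m then v j else v (Suc j))
      = det_cols n (\<lambda>j. if j < n - 2 then Q j else if j = n - 2 then a else c)"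
    "det_cols n (\<lambda>j. if j < Suc (Suc m) then v j else v (Suc j))
      = det_cols n (\<lambda>j. if j < n - 2 then Q j else if j = n - 2 then a else b)"
    by (auto intro!: det_cols_cong simp: v_def m)
  ultimately have "(-1) ^ m * (
        det_cols n (\<lambda>j. if j < n - 2 then Q j else if j = n - 2 then b else c) * L a
      - det_cols n (\<lambda>j. if j < n - 2 then Q j else if j = n - 2 then a else c) * L b
      + det_cols n (\<lambda>j. if j < n - 2 then Q j else if j = n - 2 then a else b) * L c) = 0"
    unfolding F_def by (simp add: v_def m algebra_simps)
  moreover have "(-1) ^ m * z = 0 \<Longrightarrow> z = 0" for z :: 'a
    by (metis left_minus_one_mult_self mult_zero_right)
  ultimately show ?thesis by (simp add: L_def)
qed

lemma has_vector_derivative_prod: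
  fixes f :: "'i \<Rightarrow> real \<Rightarrow> 'a :: real_normed_field"
  assumes "\<And>i. i \<in> I \<Longrightarrow> (f i has_vector_derivative f' i) (at z)"
  shows "((\<lambda>y. \<Prod>i\<in>I. f i y) has_vector_derivative (\<Sum>i\<in>I. f' i * (\<Prod>j\<in>I - {i}. f j z))) (at z)"
proof -
  have "((\<lambda>y. \<Prod>i\<in>I. f i y) has_derivative
         (\<lambda>h. \<Sum>i\<in>I. (h *\<^sub>R f' i) * (\<Prod>j\<in>I - {i}. f j z))) (at z)"
    by (rule has_derivative_prod) (use assms in \<open>auto simp: has_vector_derivative_def\<close>)
  then show ?thesis unfolding has_vector_derivative_def
    by (rule has_derivative_eq_rhs) (auto simp: fun_eq_iff scaleR_sum_right)
qed

lemma sum_prod_update_at_perm: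
  fixes n :: nat
  assumes "p permutes {0..<n}"
  shows "(\<Sum>c<n. \<Prod>i = 0..<n. if p i = c then M' i (p i) else M i (p i))
       = (\<Sum>k = 0..<n. M' k (p k) * (\<Prod>j\<in>{0..<n} - {k}. M j (p j)))"
proof -
  have "(\<Sum>c<n. \<Prod>i = 0..<n. if p i = c then M' i (p i) else M i (p i))
      = (\<Sum>k = 0..<n. \<Prod>i = 0..<n. if p i = p k then M' i (p i) else M i (p i))"
    using sum.reindex_bij_betw[OF permutes_imp_bij[OF assms],
        of "\<lambda>c. \<Prod>i = 0..<n. if p i = c then M' i (p i) else M i (p i)"]
    by (simp add: atLeast0LessThan)
  also have "\<dots> = (\<Sum>k = 0..<n. M' k (p k) * (\<Prod>j\<in>{0..<n} - {k}. M j (p j)))"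
  proof (rule sum.cong[OF refl])
    fix k assume k: "k \<in> {0..<n}"
    have "(\<Prod>i\<in>{0..<n} - {k}. if p i = p k then M' i (p i) else M i (p i))
        = (\<Prod>j\<in>{0..<n} - {k}. M j (p j))"
      using permutes_inj[OF assms] by (intro prod.cong) (auto dest: injD)
    then show "(\<Prod>i = 0..<n. if p i = p k then M' i (p i) else M i (p i))
        = M' k (p k) * (\<Prod>j\<in>{0..<n} - {k}. M j (p j))"
      using k by (simp add: prod.remove)
  qed
  finally show ?thesis .
qed

lemma has_vector_derivative_det:
  fixes M :: "real \<Rightarrow> nat \<Rightarrow> nat \<Rightarrow> 'a :: real_normed_field"
  assumes "\<And>i j. i < n \<Longrightarrow> j < n \<Longrightarrow> ((\<lambda>y. M y i j) has_vector_derivative M' i j) (at z)"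
  shows "((\<lambda>y. det (mat n n (\<lambda>(i, j). M y i j))) has_vector_derivative
           (\<Sum>c<n. det (mat n n (\<lambda>(i, j). if j = c then M' i j else M z i j)))) (at z)"
proof -
  let ?P = "{p. p permutes {0..<n}}"
  have perm_lt: "p i < n" if "p permutes {0..<n}" "i < n" for p i
    using that permutes_in_image by fastforce
  have "(\<lambda>y. det (mat n n (\<lambda>(i, j). M y i j)))
      = (\<lambda>y. \<Sum>p\<in>?P. signof p * (\<Prod>i = 0..<n. M y i (p i)))"
    by (rule ext, subst det_def'[of _ n]) (auto intro!: sum.cong prod.cong simp: permutes_def)
  moreover have "(\<Sum>c<n. det (mat n n (\<lambda>(i, j). if j = c then M' i j else M z i j)))
      = (\<Sum>p\<in>?P. signof p * (\<Sum>c<n. \<Prod>i = 0..<n. if p i = c then M' i (p i) else M z i (p i)))"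
    unfolding sum_distrib_left
    by (subst sum.swap, intro sum.cong refl, subst det_def'[of _ n])
      (auto intro!: sum.cong prod.cong simp: perm_lt)
  moreover have "((\<lambda>y. \<Sum>p\<in>?P. signof p * (\<Prod>i = 0..<n. M y i (p i))) has_vector_derivative
      (\<Sum>p\<in>?P. signof p * (\<Sum>i = 0..<n. M' i (p i) * (\<Prod>j\<in>{0..<n} - {i}. M z j (p j))))) (at z)"
    by (intro has_vector_derivative_sum has_vector_derivative_mult_right has_vector_derivative_prod)
      (use assms perm_lt in auto)
  ultimately show ?thesis
    by (simp add: sum_prod_update_at_perm)
qed

abbreviation det_idx :: "nat \<Rightarrow> (nat \<Rightarrow> nat \<Rightarrow> 'a :: comm_ring_1) \<Rightarrow> (nat \<Rightarrow> nat) \<Rightarrow> 'a" where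
  "det_idx n u ks \<equiv> det_cols n (\<lambda>j. u (ks j))"

lemma det_idx_cong: "(\<And>j. j < n \<Longrightarrow> ks j = ks' j) \<Longrightarrow> det_idx n u ks = det_idx n u ks'"
  by (rule det_cols_cong) auto

lemma det_idx_eq_0_if_repeated:
  "i < n \<Longrightarrow> j < n \<Longrightarrow> i \<noteq> j \<Longrightarrow> ks i = ks j \<Longrightarrow> det_idx n u ks = 0"
  by (rule det_cols_eq_0_if_equal_cols[of i n j]) auto

lemma det_idx_swap:
  assumes "i < n" "j < n" "i \<noteq> j"
    and "\<And>k. k < n \<Longrightarrow> ks' k = (if k = i then ks j else if k = j then ks i else ks k)"
  shows "det_idx n u ks' = - det_idx n u ks"
  by (rule det_cols_swap[OF assms(1-3)]) (simp add: assms(4))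

definition col_shift_sum :: "nat \<Rightarrow> (nat \<Rightarrow> nat \<Rightarrow> 'a :: comm_ring_1) \<Rightarrow> nat \<Rightarrow> (nat \<Rightarrow> nat) \<Rightarrow> 'a" where
  "col_shift_sum n u d ks = (\<Sum>j<n. det_idx n u (ks(j := ks j + d)))"

lemma col_shift_sum_last3:
  assumes n: "n = Suc (Suc (Suc m))" and "0 < d"
    and low: "\<And>j. j < m \<Longrightarrow> j + d < n \<and> ks (j + d) = ks j + d"
  shows "col_shift_sum n u d ks = det_idx n u (ks(m := ks m + d))
           + det_idx n u (ks(Suc m := ks (Suc m) + d))
           + det_idx n u (ks(Suc (Suc m) := ks (Suc (Suc m)) + d))"
proof -
  have "det_idx n u (ks(j := ks j + d)) = 0" if "j < m" for j
    using low[OF that] \<open>0 < d\<close> by (intro det_idx_eq_0_if_repeated[of j n "j + d"]) auto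
  then show ?thesis by (simp add: col_shift_sum_def n)
qed

text \<open>part_minor n u ps is the minor with column indices 0, 1, ..., n - 1, the last column raised
  by the first part of the partition ps, the next-to-last by the second part, and so on
  (Freeman--Nimmo's shorthand, e.g. part_minor n u [2, 1] = |0, ..., n - 3, n - 1, n + 1|).
  A partition with more than n parts gives 0, which keeps the identities below uniform in n.\<close>
definition part_idx :: "nat \<Rightarrow> nat list \<Rightarrow> nat \<Rightarrow> nat" where
  "part_idx n ps j = j + (if n - Suc j < length ps then ps ! (n - Suc j) else 0)"

definition part_minor :: "nat \<Rightarrow> (nat \<Rightarrow> nat \<Rightarrow> 'a :: comm_ring_1) \<Rightarrow> nat list \<Rightarrow> 'a" where
  "part_minor n u ps = (if length ps \<le> n then det_idx n u (part_idx n ps) else 0)"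

lemma part_minor_eq: "length ps \<le> n \<Longrightarrow> part_minor n u ps = det_idx n u (part_idx n ps)"
  by (simp add: part_minor_def)

lemma part_minor_Nil: "part_minor n u [] = det_cols n u"
  by (simp add: part_minor_def part_idx_def)

lemma nat_ge_1_cases:
  assumes "1 \<le> (n :: nat)"
  obtains "n = 1" | "n = 2" | m where "n = Suc (Suc (Suc m))"
  using assms by (metis One_nat_def Suc_1 le_Suc_eq not0_implies_Suc not_less_eq_eq)

lemma col_shift_sum_1_nil:
  assumes "1 \<le> n"
  shows "col_shift_sum n u 1 (part_idx n []) = part_minor n u [1]"
  using assms
proof (cases rule: nat_ge_1_cases)
  case (3 m)
  let ?k = "part_idx n []"
  have "col_shift_sum n u 1 ?k = det_idx n u (?k(m := ?k m + 1))
      + det_idx n u (?k(Suc m := ?k (Suc m) + 1))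
      + det_idx n u (?k(Suc (Suc m) := ?k (Suc (Suc m)) + 1))"
    by (rule col_shift_sum_last3[OF 3]) (auto simp: 3 part_idx_def)
  also have "det_idx n u (?k(m := ?k m + 1)) = 0"
    by (rule det_idx_eq_0_if_repeated[of m n "Suc m"]) (auto simp: 3 part_idx_def)
  also have "det_idx n u (?k(Suc m := ?k (Suc m) + 1)) = 0"
    by (rule det_idx_eq_0_if_repeated[of "Suc m" n "Suc (Suc m)"]) (auto simp: 3 part_idx_def)
  also have "det_idx n u (?k(Suc (Suc m) := ?k (Suc (Suc m)) + 1)) = part_minor n u [1]"
    unfolding part_minor_def by (auto simp: 3 part_idx_def less_Suc_eq intro!: det_idx_cong)
  finally show ?thesis by simp
qed (simp_all add: col_shift_sum_def part_minor_def part_idx_def det_cols_1 det_cols_2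
    numeral_2_eq_2 numeral_3_eq_3 algebra_simps)

lemma col_shift_sum_1_1:
  assumes "1 \<le> n"
  shows "col_shift_sum n u 1 (part_idx n [1]) = part_minor n u [2] + part_minor n u [1, 1]"
  using assms
proof (cases rule: nat_ge_1_cases)
  case (3 m)
  let ?k = "part_idx n [1]"
  have "col_shift_sum n u 1 ?k = det_idx n u (?k(m := ?k m + 1))
      + det_idx n u (?k(Suc m := ?k (Suc m) + 1))
      + det_idx n u (?k(Suc (Suc m) := ?k (Suc (Suc m)) + 1))"
    by (rule col_shift_sum_last3[OF 3]) (auto simp: 3 part_idx_def)
  also have "det_idx n u (?k(m := ?k m + 1)) = 0"
    by (rule det_idx_eq_0_if_repeated[of m n "Suc m"]) (auto simp: 3 part_idx_def)
  also have "det_idx n u (?k(Suc m := ?k (Suc m) + 1)) = part_minor n u [1, 1]"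
    unfolding part_minor_def by (auto simp: 3 part_idx_def less_Suc_eq intro!: det_idx_cong)
  also have "det_idx n u (?k(Suc (Suc m) := ?k (Suc (Suc m)) + 1)) = part_minor n u [2]"
    unfolding part_minor_def by (auto simp: 3 part_idx_def less_Suc_eq intro!: det_idx_cong)
  finally show ?thesis by simp
qed (simp_all add: col_shift_sum_def part_minor_def part_idx_def det_cols_1 det_cols_2
    numeral_2_eq_2 numeral_3_eq_3 algebra_simps)

lemma col_shift_sum_1_2:
  assumes "1 \<le> n"
  shows "col_shift_sum n u 1 (part_idx n [2]) = part_minor n u [3] + part_minor n u [2, 1]"
  using assms
proof (cases rule: nat_ge_1_cases)
  case (3 m)
  let ?k = "part_idx n [2]"
  have "col_shift_sum n u 1 ?k = det_idx n u (?k(m := ?k m + 1))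
      + det_idx n u (?k(Suc m := ?k (Suc m) + 1))
      + det_idx n u (?k(Suc (Suc m) := ?k (Suc (Suc m)) + 1))"
    by (rule col_shift_sum_last3[OF 3]) (auto simp: 3 part_idx_def)
  also have "det_idx n u (?k(m := ?k m + 1)) = 0"
    by (rule det_idx_eq_0_if_repeated[of m n "Suc m"]) (auto simp: 3 part_idx_def)
  also have "det_idx n u (?k(Suc m := ?k (Suc m) + 1)) = part_minor n u [2, 1]"
    unfolding part_minor_def by (auto simp: 3 part_idx_def less_Suc_eq intro!: det_idx_cong)
  also have "det_idx n u (?k(Suc (Suc m) := ?k (Suc (Suc m)) + 1)) = part_minor n u [3]"
    unfolding part_minor_def by (auto simp: 3 part_idx_def less_Suc_eq intro!: det_idx_cong)
  finally show ?thesis by simp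
qed (simp_all add: col_shift_sum_def part_minor_def part_idx_def det_cols_1 det_cols_2
    numeral_2_eq_2 numeral_3_eq_3 algebra_simps)

lemma col_shift_sum_1_11:
  assumes "2 \<le> n"
  shows "col_shift_sum n u 1 (part_idx n [1, 1]) = part_minor n u [2, 1] + part_minor n u [1, 1, 1]"
  using le_trans[OF one_le_numeral assms]
proof (cases rule: nat_ge_1_cases)
  case (3 m)
  let ?k = "part_idx n [1, 1]"
  have "col_shift_sum n u 1 ?k = det_idx n u (?k(m := ?k m + 1))
      + det_idx n u (?k(Suc m := ?k (Suc m) + 1))
      + det_idx n u (?k(Suc (Suc m) := ?k (Suc (Suc m)) + 1))"
    by (rule col_shift_sum_last3[OF 3]) (auto simp: 3 part_idx_def)
  also have "det_idx n u (?k(m := ?k m + 1)) = part_minor n u [1, 1, 1]"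
    unfolding part_minor_def by (auto simp: 3 part_idx_def less_Suc_eq intro!: det_idx_cong)
  also have "det_idx n u (?k(Suc m := ?k (Suc m) + 1)) = 0"
    by (rule det_idx_eq_0_if_repeated[of "Suc m" n "Suc (Suc m)"]) (auto simp: 3 part_idx_def)
  also have "det_idx n u (?k(Suc (Suc m) := ?k (Suc (Suc m)) + 1)) = part_minor n u [2, 1]"
    unfolding part_minor_def by (auto simp: 3 part_idx_def less_Suc_eq intro!: det_idx_cong)
  finally show ?thesis by simp
qed (use assms in \<open>simp_all add: col_shift_sum_def part_minor_def part_idx_def det_cols_1 det_cols_2
    numeral_2_eq_2 numeral_3_eq_3 algebra_simps\<close>)

lemma col_shift_sum_2_nil:
  assumes "1 \<le> n"
  shows "col_shift_sum n u 2 (part_idx n []) = part_minor n u [2] - part_minor n u [1, 1]"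
  using assms
proof (cases rule: nat_ge_1_cases)
  case (3 m)
  let ?k = "part_idx n []"
  have "col_shift_sum n u 2 ?k = det_idx n u (?k(m := ?k m + 2))
      + det_idx n u (?k(Suc m := ?k (Suc m) + 2))
      + det_idx n u (?k(Suc (Suc m) := ?k (Suc (Suc m)) + 2))"
    by (rule col_shift_sum_last3[OF 3]) (auto simp: 3 part_idx_def)
  also have "det_idx n u (?k(m := ?k m + 2)) = 0"
    by (rule det_idx_eq_0_if_repeated[of m n "Suc (Suc m)"]) (auto simp: 3 part_idx_def)
  also have "det_idx n u (?k(Suc m := ?k (Suc m) + 2)) = - part_minor n u [1, 1]"
    by (subst part_minor_eq, simp add: 3, rule det_idx_swap[of "Suc m" n "Suc (Suc m)"])
      (auto simp: 3 part_idx_def less_Suc_eq)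
  also have "det_idx n u (?k(Suc (Suc m) := ?k (Suc (Suc m)) + 2)) = part_minor n u [2]"
    unfolding part_minor_def by (auto simp: 3 part_idx_def less_Suc_eq intro!: det_idx_cong)
  finally show ?thesis by simp
qed (simp_all add: col_shift_sum_def part_minor_def part_idx_def det_cols_1 det_cols_2
    numeral_2_eq_2 numeral_3_eq_3 algebra_simps)

lemma col_shift_sum_2_1:
  assumes "1 \<le> n"
  shows "col_shift_sum n u 2 (part_idx n [1]) = part_minor n u [3] - part_minor n u [1, 1, 1]"
  using assms
proof (cases rule: nat_ge_1_cases)
  case (3 m)
  let ?k = "part_idx n [1]"
  have "col_shift_sum n u 2 ?k = det_idx n u (?k(m := ?k m + 2))
      + det_idx n u (?k(Suc m := ?k (Suc m) + 2))
      + det_idx n u (?k(Suc (Suc m) := ?k (Suc (Suc m)) + 2))"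
    by (rule col_shift_sum_last3[OF 3]) (auto simp: 3 part_idx_def)
  also have "det_idx n u (?k(m := ?k m + 2)) = - part_minor n u [1, 1, 1]"
    by (subst part_minor_eq, simp add: 3, rule det_idx_swap[of m n "Suc m"])
      (auto simp: 3 part_idx_def less_Suc_eq)
  also have "det_idx n u (?k(Suc m := ?k (Suc m) + 2)) = 0"
    by (rule det_idx_eq_0_if_repeated[of "Suc m" n "Suc (Suc m)"]) (auto simp: 3 part_idx_def)
  also have "det_idx n u (?k(Suc (Suc m) := ?k (Suc (Suc m)) + 2)) = part_minor n u [3]"
    unfolding part_minor_def by (auto simp: 3 part_idx_def less_Suc_eq intro!: det_idx_cong)
  finally show ?thesis by simp
qed (simp_all add: col_shift_sum_def part_minor_def part_idx_def det_cols_1 det_cols_2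
    numeral_2_eq_2 numeral_3_eq_3 algebra_simps)

lemma col_shift_sum_3_nil:
  assumes "1 \<le> n"
  shows "col_shift_sum n u 3 (part_idx n [])
           = part_minor n u [3] - part_minor n u [2, 1] + part_minor n u [1, 1, 1]"
  using assms
proof (cases rule: nat_ge_1_cases)
  case (3 m)
  let ?k = "part_idx n []"
  have "col_shift_sum n u 3 ?k = det_idx n u (?k(m := ?k m + 3))
      + det_idx n u (?k(Suc m := ?k (Suc m) + 3))
      + det_idx n u (?k(Suc (Suc m) := ?k (Suc (Suc m)) + 3))"
    by (rule col_shift_sum_last3[OF 3]) (auto simp: 3 part_idx_def)
  also have "det_idx n u (?k(m := ?k m + 3)) = part_minor n u [1, 1, 1]"
  proof -
    define ks where "ks = (\<lambda>k. if k = m then m + 1 else if k = Suc m then m + 3 else k)"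
    have "det_idx n u (?k(m := ?k m + 3)) = - det_idx n u ks"
      by (rule det_idx_swap[of m n "Suc m"]) (auto simp: 3 ks_def part_idx_def)
    also have "det_idx n u ks = - part_minor n u [1, 1, 1]"
      by (subst part_minor_eq, simp add: 3, rule det_idx_swap[of "Suc m" n "Suc (Suc m)"])
        (auto simp: 3 ks_def part_idx_def less_Suc_eq)
    finally show ?thesis by simp
  qed
  also have "det_idx n u (?k(Suc m := ?k (Suc m) + 3)) = - part_minor n u [2, 1]"
    by (subst part_minor_eq, simp add: 3, rule det_idx_swap[of "Suc m" n "Suc (Suc m)"])
      (auto simp: 3 part_idx_def less_Suc_eq)
  also have "det_idx n u (?k(Suc (Suc m) := ?k (Suc (Suc m)) + 3)) = part_minor n u [3]"
    unfolding part_minor_def by (auto simp: 3 part_idx_def less_Suc_eq intro!: det_idx_cong)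
  finally show ?thesis by simp
qed (simp_all add: col_shift_sum_def part_minor_def part_idx_def det_cols_1 det_cols_2
    numeral_2_eq_2 numeral_3_eq_3 algebra_simps)

lemma col_shift_sum_2_eq_trace:
  assumes "A \<in> carrier_mat n n"
    and "\<And>k i. i < n \<Longrightarrow> u (k + 2) i = (\<Sum>l<n. A $$ (i, l) * u k l)"
  shows "col_shift_sum n u 2 ks = (\<Sum>i<n. A $$ (i, i)) * det_idx n u ks"
proof -
  have "col_shift_sum n u 2 ks
      = (\<Sum>j<n. det_cols n ((\<lambda>j. u (ks j))(j := (\<lambda>i. \<Sum>l<n. A $$ (i, l) * u (ks j) l))))"
    unfolding col_shift_sum_def
    by (intro sum.cong refl det_cols_cong) (auto simp: assms(2)[of _ "ks _", simplified])
  also have "\<dots> = (\<Sum>i<n. A $$ (i, i)) * det_idx n u ks"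
    by (rule sum_det_cols_update_linear[OF assms(1)])
  finally show ?thesis .
qed

lemma part_minor_plucker_shift:
  assumes "1 \<le> n" "1 \<le> k"
  shows "part_minor n (\<lambda>i. u (Suc i)) [k, 1] * part_minor n u []
       - part_minor n (\<lambda>i. u (Suc i)) [k] * part_minor n u [1]
       + part_minor n (\<lambda>i. u (Suc i)) [] * part_minor n u [Suc k] = 0"
proof (cases "n = 1")
  case True
  then show ?thesis by (simp add: part_minor_def part_idx_def det_cols_1)
next
  case False
  then have n: "2 \<le> n" using assms by simp
  then obtain m where m: "n = Suc (Suc m)" by (metis add_2_eq_Suc le_Suc_ex)
  have "det_cols n (\<lambda>j. if j < n - 2 then u (Suc j) else if j = n - 2 then u n else u (n + k))
          * det_cols n (\<lambda>j. if j < n - 1 then u j else u (n - 1))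
      - det_cols n (\<lambda>j. if j < n - 2 then u (Suc j) else if j = n - 2 then u (n - 1) else u (n + k))
          * det_cols n (\<lambda>j. if j < n - 1 then u j else u n)
      + det_cols n (\<lambda>j. if j < n - 2 then u (Suc j) else if j = n - 2 then u (n - 1) else u n)
          * det_cols n (\<lambda>j. if j < n - 1 then u j else u (n + k)) = 0"
    by (rule det_cols_plucker[OF n]) (auto intro!: exI[of _ "Suc _"])
  moreover have
    "det_cols n (\<lambda>j. if j < n - 2 then u (Suc j) else if j = n - 2 then u n else u (n + k))
      = part_minor n (\<lambda>i. u (Suc i)) [k, 1]"
    "det_cols n (\<lambda>j. if j < n - 1 then u j else u (n - 1)) = part_minor n u []"
    "det_cols n (\<lambda>j. if j < n - 2 then u (Suc j) else if j = n - 2 then u (n - 1) else u (n + k))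
      = part_minor n (\<lambda>i. u (Suc i)) [k]"
    "det_cols n (\<lambda>j. if j < n - 1 then u j else u n) = part_minor n u [1]"
    "det_cols n (\<lambda>j. if j < n - 2 then u (Suc j) else if j = n - 2 then u (n - 1) else u n)
      = part_minor n (\<lambda>i. u (Suc i)) []"
    "det_cols n (\<lambda>j. if j < n - 1 then u j else u (n + k)) = part_minor n u [Suc k]"
    using assms by (auto simp: part_minor_def part_idx_def m less_Suc_eq intro!: det_cols_cong)
  ultimately show ?thesis by simp
qed

lemma part_minor_plucker_111:
  assumes "1 \<le> n"
  shows "part_minor n (\<lambda>i. u (Suc i)) [1, 1, 1] * part_minor n u []
       - part_minor n (\<lambda>i. u (Suc i)) [1] * part_minor n u [1, 1]
       + part_minor n (\<lambda>i. u (Suc i)) [] * part_minor n u [2, 1] = 0"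
  using assms
proof (cases rule: nat_ge_1_cases)
  case (3 m)
  have n: "2 \<le> n" using 3 by simp
  define Q where "Q = (\<lambda>j. if j < n - 3 then u (Suc j) else u (n - 1))"
  define R where "R = (\<lambda>j. if j < n - 2 then u j else u (n - 1))"
  have "det_cols n (\<lambda>j. if j < n - 2 then Q j else if j = n - 2 then u n else u (n + 1))
          * det_cols n (\<lambda>j. if j < n - 1 then R j else u (n - 2))
      - det_cols n (\<lambda>j. if j < n - 2 then Q j else if j = n - 2 then u (n - 2) else u (n + 1))
          * det_cols n (\<lambda>j. if j < n - 1 then R j else u n)
      + det_cols n (\<lambda>j. if j < n - 2 then Q j else if j = n - 2 then u (n - 2) else u n)
          * det_cols n (\<lambda>j. if j < n - 1 then R j else u (n + 1)) = 0"
  proof (rule det_cols_plucker[OF n])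
    fix i assume "i < n - 2"
    then show "\<exists>p < n - 1. R p = Q i"
      by (cases "i < n - 3") (auto simp: Q_def R_def 3 intro: exI[of _ "Suc i"] exI[of _ "n - 2"])
  qed
  moreover have
    "det_cols n (\<lambda>j. if j < n - 2 then Q j else if j = n - 2 then u n else u (n + 1))
      = part_minor n (\<lambda>i. u (Suc i)) [1, 1, 1]"
    "det_cols n (\<lambda>j. if j < n - 1 then R j else u n) = part_minor n u [1, 1]"
    "det_cols n (\<lambda>j. if j < n - 1 then R j else u (n + 1)) = part_minor n u [2, 1]"
    by (auto simp: part_minor_def part_idx_def Q_def R_def 3 less_Suc_eq intro!: det_cols_cong)
  moreover have "det_cols n (\<lambda>j. if j < n - 1 then R j else u (n - 2)) = - part_minor n u []"
    by (subst part_minor_eq, simp add: 3, rule det_cols_swap[of "Suc m" n "Suc (Suc m)"])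
      (auto simp: 3 R_def part_idx_def)
  moreover have
    "det_cols n (\<lambda>j. if j < n - 2 then Q j else if j = n - 2 then u (n - 2) else u (n + 1))
      = - part_minor n (\<lambda>i. u (Suc i)) [1]"
    by (subst part_minor_eq, simp add: 3, rule det_cols_swap[of m n "Suc m"])
      (auto simp: 3 Q_def part_idx_def less_Suc_eq)
  moreover have "det_cols n (\<lambda>j. if j < n - 2 then Q j else if j = n - 2 then u (n - 2) else u n)
      = - part_minor n (\<lambda>i. u (Suc i)) []"
    by (subst part_minor_eq, simp add: 3, rule det_cols_swap[of m n "Suc m"])
      (auto simp: 3 Q_def part_idx_def less_Suc_eq)
  ultimately show ?thesis by (simp add: algebra_simps)
qed (simp_all add: part_minor_def part_idx_def det_cols_2 numeral_2_eq_2 algebra_simps)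

text \<open>The trace identities let s2, s3, t2, t3 be eliminated; both Hirota expressions then become
  combinations of the three Pluecker relations.\<close>
lemma mkdv_bilinear_algebra:
  fixes s0 s1 s2 s3 s11 s21 s111 t0 t1 t2 t3 t11 t21 t111 a :: "'a :: comm_ring_1"
  assumes trace: "s2 - s11 = a * s0" "s3 - s111 = a * s1" "t2 - t11 = a * t0" "t3 - t111 = a * t1"
    and plucker: "t11 * s0 - t1 * s1 + t0 * s2 = 0" "t21 * s0 - t2 * s1 + t0 * s3 = 0"
      "t111 * s0 - t1 * s11 + t0 * s21 = 0"
  shows "- 4 * (t3 - t21 + t111) * s0 + 4 * t0 * (s3 - s21 + s111)
         + (t3 + 2 * t21 + t111) * s0 - 3 * (t2 + t11) * s1 + 3 * t1 * (s2 + s11)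
         - t0 * (s3 + 2 * s21 + s111) = 0"
    and "(t2 + t11) * s0 - 2 * t1 * s1 + t0 * (s2 + s11) = 0"
proof -
  have s2: "s2 = s11 + a * s0" and s3: "s3 = s111 + a * s1"
    and t2: "t2 = t11 + a * t0" and t3: "t3 = t111 + a * t1"
    using trace by (simp_all add: algebra_simps)
  have "- 4 * (t3 - t21 + t111) * s0 + 4 * t0 * (s3 - s21 + s111)
         + (t3 + 2 * t21 + t111) * s0 - 3 * (t2 + t11) * s1 + 3 * t1 * (s2 + s11)
         - t0 * (s3 + 2 * s21 + s111)
      = 6 * (t21 * s0 - t2 * s1 + t0 * s3) - 6 * (t111 * s0 - t1 * s11 + t0 * s21)"
    unfolding s2 s3 t2 t3 by (simp add: algebra_simps)
  then show "- 4 * (t3 - t21 + t111) * s0 + 4 * t0 * (s3 - s21 + s111)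
         + (t3 + 2 * t21 + t111) * s0 - 3 * (t2 + t11) * s1 + 3 * t1 * (s2 + s11)
         - t0 * (s3 + 2 * s21 + s111) = 0"
    using plucker by simp
  have "(t2 + t11) * s0 - 2 * t1 * s1 + t0 * (s2 + s11) = 2 * (t11 * s0 - t1 * s1 + t0 * s2)"
    unfolding s2 t2 by (simp add: algebra_simps)
  then show "(t2 + t11) * s0 - 2 * t1 * s1 + t0 * (s2 + s11) = 0"
    using plucker by simp
qed

lemma funpow_2_apply: "(f ^^ 2) x = f (f x)"
  by (simp add: numeral_2_eq_2)

lemma funpow_3_apply: "(f ^^ 3) x = f (f (f x))"
  by (simp add: numeral_3_eq_3)

lemma pder_replicate_False: "pder (replicate k False) g = (px ^^ k) g"
  by (induction k) auto

lemma px_eqI: "((\<lambda>y. g y t) has_vector_derivative d) (at x) \<Longrightarrow> px g x t = d"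
  by (simp add: px_def vector_derivative_at)

lemma pt_eqI: "((\<lambda>s. g x s) has_vector_derivative d) (at t) \<Longrightarrow> pt g x t = d"
  by (simp add: pt_def vector_derivative_at)

locale mkdv_wronskian =
  fixes N :: nat and A B :: "complex mat" and \<phi> :: "nat \<Rightarrow> real \<Rightarrow> real \<Rightarrow> complex"
  assumes N: "N \<ge> 1" and A: "A \<in> carrier_mat N N" and B: "B \<in> carrier_mat N N"
    and smooth: "\<And>i. i < N \<Longrightarrow> smooth2 (\<phi> i)"
    and px2_eq: "\<And>i x t. i < N \<Longrightarrow> (px ^^ 2) (\<phi> i) x t = (\<Sum>j<N. A $$ (i, j) * \<phi> j x t)"
    and px_eq: "\<And>i x t. i < N \<Longrightarrow> px (\<phi> i) x t = (\<Sum>j<N. B $$ (i, j) * cnj (\<phi> j x t))"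
    and pt_eq: "\<And>i x t. i < N \<Longrightarrow> pt (\<phi> i) x t = - 4 * (px ^^ 3) (\<phi> i) x t"
begin

lemma has_vector_derivative_x_px_pow:
  assumes "i < N"
  shows "((\<lambda>y. (px ^^ k) (\<phi> i) y t) has_vector_derivative (px ^^ Suc k) (\<phi> i) x t) (at x)"
proof -
  have "(\<lambda>y. pder (replicate k False) (\<phi> i) y t) differentiable (at x)"
    using smooth[OF assms] unfolding smooth2_def by blast
  then show ?thesis
    unfolding pder_replicate_False by (simp add: px_def vector_derivative_works[symmetric])
qed

lemma has_vector_derivative_t_px_pow:
  assumes "i < N"
  shows "((\<lambda>s. (px ^^ k) (\<phi> i) x s) has_vector_derivative pt ((px ^^ k) (\<phi> i)) x t) (at t)"
proof -
  have "(\<lambda>s. pder (replicate k False) (\<phi> i) x s) differentiable (at t)"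
    using smooth[OF assms] unfolding smooth2_def by blast
  then show ?thesis unfolding pder_replicate_False vector_derivative_works pt_def .
qed

lemma px_pow_add2:
  "i < N \<Longrightarrow> (px ^^ (k + 2)) (\<phi> i) x t = (\<Sum>l<N. A $$ (i, l) * (px ^^ k) (\<phi> l) x t)"
proof (induction k arbitrary: i x t)
  case 0
  then show ?case using px2_eq[of i x t] by (simp add: eval_nat_numeral)
next
  case (Suc k)
  have IH: "(px ^^ (k + 2)) (\<phi> i) = (\<lambda>x t. \<Sum>l<N. A $$ (i, l) * (px ^^ k) (\<phi> l) x t)"
    using Suc by (intro ext) simp
  have "(px ^^ (Suc k + 2)) (\<phi> i) x t = px ((px ^^ (k + 2)) (\<phi> i)) x t" by simp
  also have "\<dots> = (\<Sum>l<N. A $$ (i, l) * (px ^^ Suc k) (\<phi> l) x t)"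
    unfolding IH by (rule px_eqI, intro has_vector_derivative_sum has_vector_derivative_mult_right
        has_vector_derivative_x_px_pow) simp
  finally show ?case .
qed

lemma px_pow_Suc:
  "i < N \<Longrightarrow> (px ^^ (k + 1)) (\<phi> i) x t = (\<Sum>l<N. B $$ (i, l) * cnj ((px ^^ k) (\<phi> l) x t))"
proof (induction k arbitrary: i x t)
  case 0
  then show ?case using px_eq by simp
next
  case (Suc k)
  have IH: "(px ^^ (k + 1)) (\<phi> i) = (\<lambda>x t. \<Sum>l<N. B $$ (i, l) * cnj ((px ^^ k) (\<phi> l) x t))"
    using Suc by (intro ext) simp
  have "(px ^^ (Suc k + 1)) (\<phi> i) x t = px ((px ^^ (k + 1)) (\<phi> i)) x t" by simp
  also have "\<dots> = (\<Sum>l<N. B $$ (i, l) * cnj ((px ^^ Suc k) (\<phi> l) x t))"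
    unfolding IH by (rule px_eqI, intro has_vector_derivative_sum has_vector_derivative_mult_right
        has_vector_derivative_cnj has_vector_derivative_x_px_pow) simp
  finally show ?case .
qed

text \<open>For k = 1 the B-relation is needed, since the A-relation only shifts by two.\<close>
lemma pt_px_pow: "i < N \<Longrightarrow> pt ((px ^^ k) (\<phi> i)) x t = - 4 * (px ^^ (k + 3)) (\<phi> i) x t"
proof (induction k arbitrary: i x t rule: less_induct)
  case (less k)
  consider "k = 0" | "k = 1" | m where "k = Suc (Suc m)"
    by (metis One_nat_def not0_implies_Suc)
  then show ?case
  proof cases
    case 1
    then show ?thesis using pt_eq[OF less.prems] by simp
  next
    case 2
    have "(px ^^ k) (\<phi> i) = (\<lambda>x t. \<Sum>l<N. B $$ (i, l) * cnj (\<phi> l x t))"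
      using px_pow_Suc[OF less.prems, of 0] 2 by (intro ext) simp
    then have "pt ((px ^^ k) (\<phi> i)) x t = (\<Sum>l<N. B $$ (i, l) * cnj (pt (\<phi> l) x t))"
      by (simp, intro pt_eqI has_vector_derivative_sum has_vector_derivative_mult_right
          has_vector_derivative_cnj) (use has_vector_derivative_t_px_pow[of _ 0] in simp)
    also have "\<dots> = - 4 * (\<Sum>l<N. B $$ (i, l) * cnj ((px ^^ 3) (\<phi> l) x t))"
      by (simp add: pt_eq sum_distrib_left mult_ac)
    also have "\<dots> = - 4 * (px ^^ (k + 3)) (\<phi> i) x t"
      using px_pow_Suc[OF less.prems, of 3] 2 by simp
    finally show ?thesis .
  next
    case 3
    have "(px ^^ k) (\<phi> i) = (\<lambda>x t. \<Sum>l<N. A $$ (i, l) * (px ^^ m) (\<phi> l) x t)"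
      using px_pow_add2[OF less.prems, of m] 3 by (intro ext) (simp add: add_2_eq_Suc')
    then have "pt ((px ^^ k) (\<phi> i)) x t = (\<Sum>l<N. A $$ (i, l) * pt ((px ^^ m) (\<phi> l)) x t)"
      by (simp, intro pt_eqI has_vector_derivative_sum has_vector_derivative_mult_right
          has_vector_derivative_t_px_pow) simp
    also have "\<dots> = - 4 * (\<Sum>l<N. A $$ (i, l) * (px ^^ (m + 3)) (\<phi> l) x t)"
      by (simp add: less.IH 3 sum_distrib_left mult_ac)
    also have "\<dots> = - 4 * (px ^^ (k + 3)) (\<phi> i) x t"
      using px_pow_add2[OF less.prems, of "m + 3"] 3 by (simp add: add_2_eq_Suc')
    finally show ?thesis .
  qed
qed

definition deriv_col :: "nat \<Rightarrow> real \<Rightarrow> real \<Rightarrow> nat \<Rightarrow> nat \<Rightarrow> complex" where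
  "deriv_col m x t k i = (px ^^ (k + m)) (\<phi> i) x t"

definition minor :: "nat \<Rightarrow> nat list \<Rightarrow> real \<Rightarrow> real \<Rightarrow> complex" where
  "minor m ps x t = part_minor N (deriv_col m x t) ps"

lemma wronskian_eq_minor: "wronskian N \<phi> = minor 0 []"
  unfolding wronskian_def minor_def part_minor_Nil det_cols_def deriv_col_def
  by (intro ext arg_cong[of _ _ det] eq_matI) auto

lemma has_vector_derivative_x_det_idx:
  "((\<lambda>y. det_idx N (deriv_col m y t) ks) has_vector_derivative
      col_shift_sum N (deriv_col m x t) 1 ks) (at x)"
proof -
  have "((\<lambda>y. det (mat N N (\<lambda>(i, j). (px ^^ (ks j + m)) (\<phi> i) y t))) has_vector_derivative
      (\<Sum>c<N. det (mat N N (\<lambda>(i, j). if j = c then (px ^^ Suc (ks j + m)) (\<phi> i) x t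
                                      else (px ^^ (ks j + m)) (\<phi> i) x t)))) (at x)"
    by (rule has_vector_derivative_det) (rule has_vector_derivative_x_px_pow)
  then show ?thesis
    unfolding col_shift_sum_def det_cols_def deriv_col_def
    by (rule has_vector_derivative_eq_rhs) (intro sum.cong refl arg_cong[of _ _ det] eq_matI; auto)
qed

lemma has_vector_derivative_t_det_idx:
  "((\<lambda>s. det_idx N (deriv_col m x s) ks) has_vector_derivative
      - 4 * col_shift_sum N (deriv_col m x t) 3 ks) (at t)"
proof -
  let ?u = "deriv_col m x t"
  have "((\<lambda>s. det (mat N N (\<lambda>(i, j). (px ^^ (ks j + m)) (\<phi> i) x s))) has_vector_derivative
      (\<Sum>c<N. det (mat N N (\<lambda>(i, j). if j = c then - 4 * (px ^^ (ks j + m + 3)) (\<phi> i) x t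
                                      else (px ^^ (ks j + m)) (\<phi> i) x t)))) (at t)"
    by (rule has_vector_derivative_det) (metis has_vector_derivative_t_px_pow pt_px_pow)
  moreover have "(\<Sum>c<N. det (mat N N (\<lambda>(i, j). if j = c then - 4 * (px ^^ (ks j + m + 3)) (\<phi> i) x t
                                      else (px ^^ (ks j + m)) (\<phi> i) x t)))
      = (\<Sum>c<N. det_cols N ((\<lambda>j. ?u (ks j))(c := (\<lambda>i. - 4 * ?u (ks c + 3) i))))"
    unfolding det_cols_def deriv_col_def
    by (intro sum.cong refl arg_cong[of _ _ det] eq_matI) (auto simp: ac_simps)
  moreover have "\<dots> = - 4 * col_shift_sum N ?u 3 ks"
    unfolding col_shift_sum_def sum_distrib_left
    by (intro sum.cong refl, subst det_cols_update_col_scale)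
      (auto intro!: arg_cong[of _ _ "\<lambda>z. - 4 * z"] det_cols_cong)
  moreover have "(\<lambda>s. det (mat N N (\<lambda>(i, j). (px ^^ (ks j + m)) (\<phi> i) x s)))
      = (\<lambda>s. det_idx N (deriv_col m x s) ks)"
    unfolding det_cols_def deriv_col_def by (intro ext arg_cong[of _ _ det] eq_matI) auto
  ultimately show ?thesis by simp
qed

lemma has_vector_derivative_x_minor:
  "((\<lambda>y. minor m [] y t) has_vector_derivative minor m [1] x t) (at x)"
  "((\<lambda>y. minor m [1] y t) has_vector_derivative minor m [2] x t + minor m [1, 1] x t) (at x)"
  "((\<lambda>y. minor m [2] y t) has_vector_derivative minor m [3] x t + minor m [2, 1] x t) (at x)"
  "((\<lambda>y. minor m [1, 1] y t) has_vector_derivative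
      minor m [2, 1] x t + minor m [1, 1, 1] x t) (at x)"
proof -
  note d = has_vector_derivative_x_det_idx[of m t _ x]
  show "((\<lambda>y. minor m [] y t) has_vector_derivative minor m [1] x t) (at x)"
    using d[of "part_idx N []"] col_shift_sum_1_nil[OF N, of "deriv_col m x t"] N
    by (simp add: minor_def part_minor_eq)
  show "((\<lambda>y. minor m [1] y t) has_vector_derivative minor m [2] x t + minor m [1, 1] x t) (at x)"
    using d[of "part_idx N [1]"] col_shift_sum_1_1[OF N, of "deriv_col m x t"] N
    by (simp add: minor_def part_minor_eq)
  show "((\<lambda>y. minor m [2] y t) has_vector_derivative minor m [3] x t + minor m [2, 1] x t) (at x)"
    using d[of "part_idx N [2]"] col_shift_sum_1_2[OF N, of "deriv_col m x t"] N
    by (simp add: minor_def part_minor_eq)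
  show "((\<lambda>y. minor m [1, 1] y t) has_vector_derivative
      minor m [2, 1] x t + minor m [1, 1, 1] x t) (at x)"
  proof (cases "2 \<le> N")
    case True
    then show ?thesis
      using d[of "part_idx N [1, 1]"] col_shift_sum_1_11[OF True, of "deriv_col m x t"]
      by (simp add: minor_def part_minor_eq)
  qed (simp add: minor_def part_minor_def)
qed

lemma has_vector_derivative_t_minor:
  "((\<lambda>s. minor m [] x s) has_vector_derivative
      - 4 * (minor m [3] x t - minor m [2, 1] x t + minor m [1, 1, 1] x t)) (at t)"
  using has_vector_derivative_t_det_idx[of m x "part_idx N []" t]
    col_shift_sum_3_nil[OF N, of "deriv_col m x t"]
  by (simp add: minor_def part_minor_eq algebra_simps)

lemma deriv_col_add2:
  "i < N \<Longrightarrow> deriv_col m x t (k + 2) i = (\<Sum>l<N. A $$ (i, l) * deriv_col m x t k l)"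
  unfolding deriv_col_def using px_pow_add2[of i "k + m" x t] by (simp add: ac_simps)

lemma minor_trace:
  "minor m [2] x t - minor m [1, 1] x t = (\<Sum>i<N. A $$ (i, i)) * minor m [] x t"
  "minor m [3] x t - minor m [1, 1, 1] x t = (\<Sum>i<N. A $$ (i, i)) * minor m [1] x t"
  using col_shift_sum_2_eq_trace[OF A, of "deriv_col m x t", OF deriv_col_add2]
    col_shift_sum_2_nil[OF N, of "deriv_col m x t"] col_shift_sum_2_1[OF N, of "deriv_col m x t"] N
  by (simp_all add: minor_def part_minor_eq)

lemma minor_plucker:
  "minor 1 [1, 1] x t * minor 0 [] x t - minor 1 [1] x t * minor 0 [1] x t
     + minor 1 [] x t * minor 0 [2] x t = 0"
  "minor 1 [2, 1] x t * minor 0 [] x t - minor 1 [2] x t * minor 0 [1] x t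
     + minor 1 [] x t * minor 0 [3] x t = 0"
  "minor 1 [1, 1, 1] x t * minor 0 [] x t - minor 1 [1] x t * minor 0 [1, 1] x t
     + minor 1 [] x t * minor 0 [2, 1] x t = 0"
proof -
  have shift: "deriv_col 1 x t = (\<lambda>k. deriv_col 0 x t (Suc k))"
    unfolding deriv_col_def by (intro ext) simp
  show "minor 1 [1, 1] x t * minor 0 [] x t - minor 1 [1] x t * minor 0 [1] x t
     + minor 1 [] x t * minor 0 [2] x t = 0"
    using part_minor_plucker_shift[OF N, of 1] unfolding minor_def shift
    by (simp add: numeral_2_eq_2)
  show "minor 1 [2, 1] x t * minor 0 [] x t - minor 1 [2] x t * minor 0 [1] x t
     + minor 1 [] x t * minor 0 [3] x t = 0"
    using part_minor_plucker_shift[OF N, of 2] unfolding minor_def shift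
    by (simp add: numeral_3_eq_3)
  show "minor 1 [1, 1, 1] x t * minor 0 [] x t - minor 1 [1] x t * minor 0 [1, 1] x t
     + minor 1 [] x t * minor 0 [2, 1] x t = 0"
    using part_minor_plucker_111[OF N] unfolding minor_def shift by simp
qed

text \<open>Since B * conj(phi^(k)) = phi^(k+1), the matrix B times the conjugated Wronskian matrix is
  the Wronskian matrix of phi_x.\<close>
lemma det_mult_cnj_minor: "det B * cnj (minor 0 [] x t) = minor 1 [] x t"
proof -
  define M where "M = mat N N (\<lambda>(i, j). (px ^^ j) (\<phi> i) x t)"
  have M: "M \<in> carrier_mat N N" by (simp add: M_def)
  have "minor 0 [] x t = det M"
    unfolding minor_def part_minor_Nil det_cols_def deriv_col_def M_def
    by (intro arg_cong[of _ _ det] eq_matI) auto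
  moreover have "cnj (det M) = det (map_mat cnj M)"
    using M by (simp add: det_def'[OF M] det_def'[of "map_mat cnj M" N])
  moreover have "B * map_mat cnj M = mat N N (\<lambda>(i, j). (px ^^ (j + 1)) (\<phi> i) x t)"
    by (rule eq_matI)
      (use B in \<open>auto simp: M_def scalar_prod_def atLeast0LessThan px_pow_Suc[simplified]\<close>)
  moreover have "det (mat N N (\<lambda>(i, j). (px ^^ (j + 1)) (\<phi> i) x t)) = minor 1 [] x t"
    unfolding minor_def part_minor_Nil det_cols_def deriv_col_def
    by (intro arg_cong[of _ _ det] eq_matI) auto
  ultimately show ?thesis using det_mult[OF B, of "map_mat cnj M"] M by simp
qed

lemma has_vector_derivative_x_minor_2_11:
  "((\<lambda>y. minor m [2] y t + minor m [1, 1] y t) has_vector_derivative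
      minor m [3] x t + 2 * minor m [2, 1] x t + minor m [1, 1, 1] x t) (at x)"
  by (rule has_vector_derivative_eq_rhs,
      rule has_vector_derivative_add[OF has_vector_derivative_x_minor(3,4)]) simp

lemma px_minor:
  "px (\<lambda>x t. c * minor m [] x t) = (\<lambda>x t. c * minor m [1] x t)"
  "px (\<lambda>x t. c * minor m [1] x t) = (\<lambda>x t. c * (minor m [2] x t + minor m [1, 1] x t))"
  "px (\<lambda>x t. c * (minor m [2] x t + minor m [1, 1] x t))
     = (\<lambda>x t. c * (minor m [3] x t + 2 * minor m [2, 1] x t + minor m [1, 1, 1] x t))"
  "pt (\<lambda>x t. c * minor m [] x t)
     = (\<lambda>x t. c * (- 4 * (minor m [3] x t - minor m [2, 1] x t + minor m [1, 1, 1] x t)))"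
  by (intro ext px_eqI pt_eqI has_vector_derivative_mult_right has_vector_derivative_x_minor
        has_vector_derivative_x_minor_2_11 has_vector_derivative_t_minor)+

lemma hirota_minor:
  "hirota_Dt (\<lambda>x t. c * minor 1 [] x t) (minor 0 []) x t
     + hirota_Dx3 (\<lambda>x t. c * minor 1 [] x t) (minor 0 []) x t = 0"
  "hirota_Dx2 (\<lambda>x t. c * minor 1 [] x t) (minor 0 []) x t = 0"
proof -
  define s where "s ps = minor 0 ps x t" for ps
  define r where "r ps = minor 1 ps x t" for ps
  note identities = mkdv_bilinear_algebra[OF minor_trace[of 0 x t] minor_trace[of 1 x t]
      minor_plucker[of x t], folded s_def r_def]
  note px_minor_unscaled = px_minor[where c = 1, simplified]
  have "hirota_Dt (\<lambda>x t. c * minor 1 [] x t) (minor 0 []) x t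
      + hirota_Dx3 (\<lambda>x t. c * minor 1 [] x t) (minor 0 []) x t
      = c * (- 4 * (r [3] - r [2, 1] + r [1, 1, 1]) * s []
         + 4 * r [] * (s [3] - s [2, 1] + s [1, 1, 1])
         + (r [3] + 2 * r [2, 1] + r [1, 1, 1]) * s [] - 3 * (r [2] + r [1, 1]) * s [1]
         + 3 * r [1] * (s [2] + s [1, 1]) - r [] * (s [3] + 2 * s [2, 1] + s [1, 1, 1]))"
    unfolding hirota_Dt_def hirota_Dx3_def funpow_2_apply funpow_3_apply px_minor px_minor_unscaled
      s_def r_def
    by (simp add: algebra_simps)
  also have "\<dots> = 0"
    by (simp only: identities mult_zero_right)
  finally show "hirota_Dt (\<lambda>x t. c * minor 1 [] x t) (minor 0 []) x t
      + hirota_Dx3 (\<lambda>x t. c * minor 1 [] x t) (minor 0 []) x t = 0" .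
  have "hirota_Dx2 (\<lambda>x t. c * minor 1 [] x t) (minor 0 []) x t
      = c * ((r [2] + r [1, 1]) * s [] - 2 * r [1] * s [1] + r [] * (s [2] + s [1, 1]))"
    unfolding hirota_Dx2_def funpow_2_apply px_minor px_minor_unscaled s_def r_def
    by (simp add: algebra_simps)
  also have "\<dots> = 0"
    by (simp only: identities mult_zero_right)
  finally show "hirota_Dx2 (\<lambda>x t. c * minor 1 [] x t) (minor 0 []) x t = 0" .
qed

end

theorem theorem4p2p1:
  fixes N :: nat and A B :: "complex mat" and \<phi> :: "nat \<Rightarrow> real \<Rightarrow> real \<Rightarrow> complex"
  assumes "N \<ge> 1"
    and "A \<in> carrier_mat N N" and "B \<in> carrier_mat N N"
    and "Determinant.det B \<noteq> 0"
    and "A = B * map_mat cnj B"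
    and "\<And>i. i < N \<Longrightarrow> smooth2 (\<phi> i)"
    and "\<And>i x t. i < N \<Longrightarrow> (px ^^ 2) (\<phi> i) x t = (\<Sum>j<N. A $$ (i, j) * \<phi> j x t)"
    and "\<And>i x t. i < N \<Longrightarrow> px (\<phi> i) x t = (\<Sum>j<N. B $$ (i, j) * cnj (\<phi> j x t))"
    and "\<And>i x t. i < N \<Longrightarrow> pt (\<phi> i) x t = - 4 * (px ^^ 3) (\<phi> i) x t"
  shows "\<forall>x t. let f = wronskian N \<phi>; fs = (\<lambda>x t. cnj (f x t)) in
           hirota_Dt fs f x t + hirota_Dx3 fs f x t = 0 \<and> hirota_Dx2 fs f x t = 0"
proof -
  interpret mkdv_wronskian N A B \<phi>
    using assms by unfold_locales auto
  have fs: "(\<lambda>x t. cnj (wronskian N \<phi> x t)) = (\<lambda>x t. inverse (det B) * minor 1 [] x t)"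
    using det_mult_cnj_minor assms(4) by (intro ext) (simp add: wronskian_eq_minor field_simps)
  show ?thesis
    unfolding Let_def fs unfolding wronskian_eq_minor using hirota_minor by simp
qed

end
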